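(* For $\gamma>0$ let $\Theta^*$ be a random variable on $\mathbb S^1=\mathbb R/2\pi\mathbb Z$ with density $u^*$, where $u^*(\theta)=\frac1Z\Big(\frac{(e^{-2\pi\alpha}-1)e^{\alpha(\theta+2\sin\theta)}}{\int_0^{2\pi}e^{-\alpha(r+2\sin r)}dr}\int_0^\theta e^{-\alpha(r+2\sin r)}dr+e^{\alpha(\theta+2\sin\theta)}\Big)$, $\alpha=2/\gamma$, $Z$ a normalizer. Then for any constants $c>0$ and $\epsilon>0$ there exists $\gamma_0>0$ such that $\mathbb P[|\Theta^*-2\pi/3|>c]<\epsilon$ for all $0<\gamma<\gamma_0$ (distance measured on the circle).
   Context: $u^*$ is the invariant density of $d\theta=I_2(1+2\cos\theta)dt+\sqrt{\gamma I_2}dB_t$ on the circle (for any fixed $I_2>0$). *)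

theory Defs
  imports "HOL-Analysis.Analysis"
begin

definition alpha :: "real \<Rightarrow> real" where
  "alpha \<gamma> = 2 / \<gamma>"

definition negexp :: "real \<Rightarrow> real \<Rightarrow> real" where
  "negexp a r = exp (- a * (r + 2 * sin r))"

definition u_unnorm :: "real \<Rightarrow> real \<Rightarrow> real" where
  "u_unnorm \<gamma> \<theta> =
     (let a = alpha \<gamma> in
        (exp (-2 * pi * a) - 1) * exp (a * (\<theta> + 2 * sin \<theta>))
          / integral {0..2*pi} (negexp a) * integral {0..\<theta>} (negexp a)
        + exp (a * (\<theta> + 2 * sin \<theta>)))"

definition Zn :: "real \<Rightarrow> real" where
  "Zn \<gamma> = integral {0..2*pi} (u_unnorm \<gamma>)"

text \<open>The invariant density u* on [0, 2 pi] (representing the circle R / 2 pi Z).\<close>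
definition u_star :: "real \<Rightarrow> real \<Rightarrow> real" where
  "u_star \<gamma> \<theta> = u_unnorm \<gamma> \<theta> / Zn \<gamma>"

definition circ_dist :: "real \<Rightarrow> real \<Rightarrow> real" where
  "circ_dist x y = (INF k::int. \<bar>x - y - 2 * pi * of_int k\<bar>)"

end

theory Submission
  imports Defs
begin

text \<open>With \<open>P \<theta> = \<theta> + 2 sin \<theta>\<close> and \<open>a = 2/\<gamma>\<close>, the unnormalised density at \<open>t\<close> is, up to the
factor \<open>1 / \<integral>\<^sub>0\<^sup>2\<^sup>\<pi> exp (-a P)\<close>, the sum of \<open>\<integral>\<^sub>t\<^sup>2\<^sup>\<pi> exp (a (P t - P r)) dr\<close> and
\<open>\<integral>\<^sub>0\<^sup>t exp (a (P t - P r - 2\<pi>)) dr\<close>, the second integral accounting for a full turn of the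
circle. On \<open>[0, 2\<pi>]\<close> the potential \<open>P\<close> rises to a local maximum at \<open>2\<pi>/3\<close>, falls to a
local minimum at \<open>4\<pi>/3\<close> and rises again; let \<open>B\<close> be the height of this barrier. If \<open>t\<close> is
more than \<open>c\<close> away from \<open>2\<pi>/3\<close>, every exponent \<open>P t - P r\<close> with \<open>r \<ge> t\<close> is at most \<open>B - d\<close>
for some \<open>d > 0\<close>, whereas for \<open>t\<close> just left of \<open>2\<pi>/3\<close> and \<open>r\<close> just left of \<open>4\<pi>/3\<close> it is at
least \<open>B - d/2\<close>. Integrating the latter bound over such \<open>t\<close> bounds the normaliser from
below, so away from \<open>2\<pi>/3\<close> the density is at most a constant times
\<open>exp (-a d/2) = exp (-d/\<gamma>)\<close>.\<close>

definition potential :: "real \<Rightarrow> real" where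
  "potential x = x + 2 * sin x"

lemma potential_deriv: "(potential has_real_derivative 1 + 2 * cos x) (at x)"
  unfolding potential_def by (auto intro!: derivative_eq_intros)

lemma continuous_on_potential: "continuous_on S potential"
  unfolding potential_def by (intro continuous_intros)

lemma cos_gt_minus_half_left: "0 < t \<Longrightarrow> t < 2*pi/3 \<Longrightarrow> -1/2 < cos t"
  using cos_monotone_0_pi[of t "2*pi/3"] cos_120 by auto

lemma cos_lt_minus_half: "2*pi/3 < t \<Longrightarrow> t < 4*pi/3 \<Longrightarrow> cos t < -1/2"
proof (cases "t \<le> pi")
  case True
  assume "2*pi/3 < t"
  then show ?thesis using cos_monotone_0_pi[of "2*pi/3" t] cos_120 True by auto
next
  case False
  assume "t < 4*pi/3"
  then have "cos (2*pi - t) < cos (2*pi/3)"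
    using False by (intro cos_monotone_0_pi) auto
  then show ?thesis using cos_120 by simp
qed

lemma cos_gt_minus_half_right: "4*pi/3 < t \<Longrightarrow> t < 2*pi \<Longrightarrow> -1/2 < cos t"
  using cos_gt_minus_half_left[of "2*pi - t"] by simp

lemma potential_increasing_left:
  assumes "0 \<le> x" "x < y" "y \<le> 2*pi/3"
  shows "potential x < potential y"
proof (rule DERIV_pos_imp_increasing_open[OF \<open>x < y\<close> _ continuous_on_potential])
  fix t assume "x < t" "t < y"
  then have "0 < 1 + 2 * cos t" using cos_gt_minus_half_left[of t] assms by simp
  then show "\<exists>z. (potential has_real_derivative z) (at t) \<and> 0 < z"
    using potential_deriv by blast
qed

lemma potential_decreasing:
  assumes "2*pi/3 \<le> x" "x < y" "y \<le> 4*pi/3"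
  shows "potential y < potential x"
proof (rule DERIV_neg_imp_decreasing_open[OF \<open>x < y\<close> _ continuous_on_potential])
  fix t assume "x < t" "t < y"
  then have "1 + 2 * cos t < 0" using cos_lt_minus_half[of t] assms by simp
  then show "\<exists>z. (potential has_real_derivative z) (at t) \<and> z < 0"
    using potential_deriv by blast
qed

lemma potential_increasing_right:
  assumes "4*pi/3 \<le> x" "x < y" "y \<le> 2*pi"
  shows "potential x < potential y"
proof (rule DERIV_pos_imp_increasing_open[OF \<open>x < y\<close> _ continuous_on_potential])
  fix t assume "x < t" "t < y"
  then have "0 < 1 + 2 * cos t" using cos_gt_minus_half_right[of t] assms by simp
  then show "\<exists>z. (potential has_real_derivative z) (at t) \<and> 0 < z"
    using potential_deriv by blast
qed

lemma potential_nonneg: "0 \<le> x \<Longrightarrow> x \<le> 2*pi \<Longrightarrow> 0 \<le> potential x"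
proof (cases "x \<le> pi")
  case True
  assume "0 \<le> x"
  then show ?thesis using sin_ge_zero[of x] True unfolding potential_def by auto
next
  case False
  then show ?thesis using pi_gt3 sin_ge_minus_one[of x] unfolding potential_def by linarith
qed

lemma potential_le_2pi: "0 \<le> x \<Longrightarrow> x \<le> 2*pi \<Longrightarrow> potential x \<le> 2*pi"
proof (cases "x \<le> pi")
  case True
  then show ?thesis using pi_gt3 sin_le_one[of x] unfolding potential_def by linarith
next
  case False
  assume "x \<le> 2*pi"
  have "sin x \<le> 0"
    using False \<open>x \<le> 2*pi\<close> sin_le_zero[of x] by (cases "x = 2*pi") auto
  then show ?thesis using \<open>x \<le> 2*pi\<close> unfolding potential_def by auto
qed

lemma potential_ge_local_min: "2*pi/3 \<le> r \<Longrightarrow> r \<le> 2*pi \<Longrightarrow> potential (4*pi/3) \<le> potential r"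
proof -
  assume "2*pi/3 \<le> r" "r \<le> 2*pi"
  consider "r < 4*pi/3" | "r = 4*pi/3" | "4*pi/3 < r" by linarith
  then show ?thesis
  proof cases
    case 1
    then show ?thesis using potential_decreasing[of r "4*pi/3"] \<open>2*pi/3 \<le> r\<close> by simp
  next
    case 3
    then show ?thesis using potential_increasing_right[of "4*pi/3" r] \<open>r \<le> 2*pi\<close> by simp
  next
    case 2
    then show ?thesis by (simp only: order_refl)
  qed
qed

lemma potential_lt_local_max:
  "0 \<le> x \<Longrightarrow> x \<le> 4*pi/3 \<Longrightarrow> x \<noteq> 2*pi/3 \<Longrightarrow> potential x < potential (2*pi/3)"
  using potential_increasing_left[of x "2*pi/3"] potential_decreasing[of "2*pi/3" x]
  by (cases "x < 2*pi/3") auto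

definition barrier :: real where
  "barrier = potential (2*pi/3) - potential (4*pi/3)"

lemma barrier_pos: "0 < barrier"
  using potential_lt_local_max[of "4*pi/3"] unfolding barrier_def by simp

lemma potential_gap_away_from_max:
  assumes "0 < c"
  obtains d where "0 < d" "d \<le> barrier"
    "\<And>x. 0 \<le> x \<Longrightarrow> x \<le> 4*pi/3 \<Longrightarrow> c < \<bar>x - 2*pi/3\<bar> \<Longrightarrow> potential x \<le> potential (2*pi/3) - d"
proof -
  define S where "S = {0..4*pi/3} \<inter> {x. c \<le> \<bar>x - 2*pi/3\<bar>}"
  have "compact S" unfolding S_def
    by (intro compact_Int_closed compact_Icc closed_Collect_le continuous_intros)
  show ?thesis
  proof (cases "S = {}")
    case True
    then show ?thesis using that[of barrier] barrier_pos unfolding S_def by force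
  next
    case False
    then obtain x where x: "x \<in> S" "\<And>y. y \<in> S \<Longrightarrow> potential y \<le> potential x"
      using continuous_attains_sup[OF \<open>compact S\<close> False continuous_on_potential] by blast
    have "potential x < potential (2*pi/3)"
      using x(1) assms unfolding S_def by (intro potential_lt_local_max) auto
    then show ?thesis
      using that[of "min barrier (potential (2*pi/3) - potential x)"] barrier_pos x
      unfolding S_def by force
  qed
qed

lemma potential_increment_away_from_max:
  assumes gap: "\<And>x. 0 \<le> x \<Longrightarrow> x \<le> 4*pi/3 \<Longrightarrow> c < \<bar>x - 2*pi/3\<bar> \<Longrightarrow>
      potential x \<le> potential (2*pi/3) - d"
    and "d \<le> barrier" "0 \<le> t" "t \<le> r" "r \<le> 2*pi" "c < \<bar>t - 2*pi/3\<bar>"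
  shows "potential t - potential r \<le> barrier - d"
proof (cases "4*pi/3 < t")
  case True
  then have "potential t \<le> potential r"
    using potential_increasing_right[of t r] assms by (cases "t = r") auto
  then show ?thesis using assms by auto
next
  case False
  then have max: "potential t \<le> potential (2*pi/3) - d" using gap assms by auto
  show ?thesis
  proof (cases "r < 2*pi/3")
    case True
    then have "potential t \<le> potential r"
      using potential_increasing_left[of t r] assms by (cases "t = r") auto
    then show ?thesis using assms by auto
  next
    case False
    then show ?thesis
      using max potential_ge_local_min[of r] assms unfolding barrier_def by auto
  qed
qed

lemma negexp_eq: "negexp a r = exp (- a * potential r)"
  unfolding negexp_def potential_def by simp

lemma continuous_on_negexp: "continuous_on S (negexp a)"
  unfolding negexp_def by (intro continuous_intros)

lemma integral_negexp_pos: "0 < integral {0..2*pi} (negexp a)"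
proof -
  have "integral {0..2*pi} (\<lambda>_. exp (- \<bar>a\<bar> * (2*pi))) \<le> integral {0..2*pi} (negexp a)"
  proof (rule integral_le)
    fix r :: real assume "r \<in> {0..2*pi}"
    then have "\<bar>a * potential r\<bar> \<le> \<bar>a\<bar> * (2*pi)"
      using potential_nonneg[of r] potential_le_2pi[of r]
      by (simp add: abs_mult mult_left_mono)
    then show "exp (- \<bar>a\<bar> * (2*pi)) \<le> negexp a r" unfolding negexp_eq by simp
  qed (auto intro: integrable_continuous_interval continuous_on_negexp)
  moreover have "0 < integral {0..2*pi} (\<lambda>_. exp (- \<bar>a\<bar> * (2*pi)))" by simp
  ultimately show ?thesis by linarith
qed

lemma alpha_pos: "0 < \<gamma> \<Longrightarrow> 0 < alpha \<gamma>"
  unfolding alpha_def by simp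

lemma u_unnorm_eq_integrals:
  assumes "0 \<le> t" "t \<le> 2*pi"
  shows "u_unnorm \<gamma> t =
    (integral {t..2*pi} (\<lambda>r. exp (alpha \<gamma> * (potential t - potential r)))
     + integral {0..t} (\<lambda>r. exp (alpha \<gamma> * (potential t - potential r - 2*pi))))
    / integral {0..2*pi} (negexp (alpha \<gamma>))"
proof -
  define a where "a = alpha \<gamma>"
  define I where "I = integral {0..2*pi} (negexp a)"
  define It where "It = integral {0..t} (negexp a)"
  define Jt where "Jt = integral {t..2*pi} (negexp a)"
  define E where "E = exp (a * potential t)"
  have "0 < I" unfolding I_def by (rule integral_negexp_pos)
  have split: "It + Jt = I" unfolding It_def Jt_def I_def using assms
    by (intro Henstock_Kurzweil_Integration.integral_combine integrable_continuous_interval continuous_on_negexp) auto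
  have "(\<lambda>r. exp (a * (potential t - potential r))) = (\<lambda>r. E * negexp a r)"
    unfolding E_def negexp_eq by (simp add: algebra_simps flip: exp_add)
  then have forward: "integral {t..2*pi} (\<lambda>r. exp (a * (potential t - potential r))) = E * Jt"
    unfolding Jt_def by simp
  have "(\<lambda>r. exp (a * (potential t - potential r - 2*pi))) = (\<lambda>r. exp (-2*pi*a) * E * negexp a r)"
    unfolding E_def negexp_eq by (simp add: algebra_simps flip: exp_add)
  then have backward:
    "integral {0..t} (\<lambda>r. exp (a * (potential t - potential r - 2*pi))) = exp (-2*pi*a) * E * It"
    unfolding It_def by simp
  have "u_unnorm \<gamma> t = (exp (-2*pi*a) - 1) * E / I * It + E"
    unfolding u_unnorm_def Let_def a_def[symmetric] E_def potential_def I_def It_def by simp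
  also have "\<dots> = (E * Jt + exp (-2*pi*a) * E * It) / I"
    using \<open>0 < I\<close> split[symmetric] by (simp add: field_simps)
  finally show ?thesis using forward backward unfolding a_def I_def by simp
qed

lemma u_unnorm_ge_forward_integral:
  assumes "0 \<le> t" "t \<le> 2*pi"
  shows "integral {t..2*pi} (\<lambda>r. exp (alpha \<gamma> * (potential t - potential r)))
      / integral {0..2*pi} (negexp (alpha \<gamma>)) \<le> u_unnorm \<gamma> t"
proof -
  have "0 \<le> integral {0..t} (\<lambda>r. exp (alpha \<gamma> * (potential t - potential r - 2*pi)))"
    by (intro integral_nonneg integrable_continuous_interval continuous_intros
        continuous_on_potential) auto
  then show ?thesis unfolding u_unnorm_eq_integrals[OF assms]
    using integral_negexp_pos[of "alpha \<gamma>"] by (intro divide_right_mono) auto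
qed

lemma u_unnorm_nonneg:
  assumes "0 \<le> t" "t \<le> 2*pi"
  shows "0 \<le> u_unnorm \<gamma> t"
proof -
  have "0 \<le> integral {t..2*pi} (\<lambda>r. exp (alpha \<gamma> * (potential t - potential r)))"
    by (intro integral_nonneg integrable_continuous_interval continuous_intros
        continuous_on_potential) auto
  then show ?thesis
    using u_unnorm_ge_forward_integral[OF assms] integral_negexp_pos[of "alpha \<gamma>"]
    by (meson divide_nonneg_pos order_trans)
qed

lemma continuous_on_u_unnorm: "continuous_on {0..2*pi} (u_unnorm \<gamma>)"
proof -
  have "continuous_on {0..2*pi} (\<lambda>x. integral {0..x} (negexp (alpha \<gamma>)))"
    by (intro indefinite_integral_continuous_1 integrable_continuous_interval continuous_on_negexp)
  then show ?thesis unfolding u_unnorm_def Let_def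
    using integral_negexp_pos[of "alpha \<gamma>"] by (intro continuous_intros) auto
qed

lemma u_unnorm_le_away_from_max:
  assumes "0 < \<gamma>"
    and gap: "\<And>x. 0 \<le> x \<Longrightarrow> x \<le> 4*pi/3 \<Longrightarrow> c < \<bar>x - 2*pi/3\<bar> \<Longrightarrow>
      potential x \<le> potential (2*pi/3) - d"
    and "d \<le> barrier" "0 \<le> t" "t \<le> 2*pi" "c < \<bar>t - 2*pi/3\<bar>"
  shows "u_unnorm \<gamma> t \<le> 2*pi * exp (alpha \<gamma> * (barrier - d)) / integral {0..2*pi} (negexp (alpha \<gamma>))"
proof -
  define a where "a = alpha \<gamma>"
  define C where "C = exp (a * (barrier - d))"
  have "0 < a" unfolding a_def using alpha_pos[OF \<open>0 < \<gamma>\<close>] .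
  have "1 \<le> C" unfolding C_def using \<open>0 < a\<close> \<open>d \<le> barrier\<close> by simp
  have integrable: "(\<lambda>r. exp (a * (potential t - potential r - s))) integrable_on {x..y}" for s x y
    by (intro integrable_continuous_interval continuous_intros continuous_on_potential)
  have forward: "integral {t..2*pi} (\<lambda>r. exp (a * (potential t - potential r)))
      \<le> integral {t..2*pi} (\<lambda>_. C)"
  proof (rule integral_le)
    fix r assume "r \<in> {t..2*pi}"
    then have "potential t - potential r \<le> barrier - d"
      using potential_increment_away_from_max[OF gap] assms by auto
    then show "exp (a * (potential t - potential r)) \<le> C"
      unfolding C_def using \<open>0 < a\<close> by (simp add: mult_left_mono)
  qed (use integrable[of 0] in auto)
  have backward: "integral {0..t} (\<lambda>r. exp (a * (potential t - potential r - 2*pi)))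
      \<le> integral {0..t} (\<lambda>_. C)"
  proof (rule integral_le)
    fix r assume "r \<in> {0..t}"
    then have "potential t - potential r - 2*pi \<le> 0"
      using potential_le_2pi[of t] potential_nonneg[of r] assms by auto
    then have "exp (a * (potential t - potential r - 2*pi)) \<le> 1"
      using \<open>0 < a\<close> by (simp add: mult_nonneg_nonpos)
    then show "exp (a * (potential t - potential r - 2*pi)) \<le> C" using \<open>1 \<le> C\<close> by linarith
  qed (use integrable in auto)
  have "u_unnorm \<gamma> t \<le> ((2*pi - t) * C + t * C) / integral {0..2*pi} (negexp a)"
    unfolding u_unnorm_eq_integrals[OF assms(4,5)] a_def[symmetric]
    using forward backward assms integral_negexp_pos[of a] by (intro divide_right_mono) auto
  then show ?thesis unfolding C_def a_def by (simp add: algebra_simps)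
qed

text \<open>The lower bound keeps only \<open>r\<close> near the local minimum \<open>4\<pi>/3\<close> in the forward integral.\<close>

lemma u_unnorm_ge_near_max:
  assumes "0 < \<gamma>" "0 < \<eta>" "\<eta> \<le> pi/3"
    and near: "\<And>t r. \<bar>t - 2*pi/3\<bar> \<le> \<eta> \<Longrightarrow> \<bar>r - 4*pi/3\<bar> \<le> \<eta> \<Longrightarrow>
      barrier - e \<le> potential t - potential r"
    and "2*pi/3 - \<eta> \<le> t" "t \<le> 2*pi/3"
  shows "\<eta> * exp (alpha \<gamma> * (barrier - e)) / integral {0..2*pi} (negexp (alpha \<gamma>)) \<le> u_unnorm \<gamma> t"
proof -
  define a where "a = alpha \<gamma>"
  have "0 < a" unfolding a_def using alpha_pos[OF \<open>0 < \<gamma>\<close>] .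
  have integrable: "(\<lambda>r. exp (a * (potential t - potential r))) integrable_on {x..y}" for x y
    by (intro integrable_continuous_interval continuous_intros continuous_on_potential)
  have "integral {4*pi/3-\<eta>..4*pi/3} (\<lambda>_. exp (a * (barrier - e)))
        \<le> integral {4*pi/3-\<eta>..4*pi/3} (\<lambda>r. exp (a * (potential t - potential r)))"
  proof (rule integral_le)
    fix r assume "r \<in> {4*pi/3-\<eta>..4*pi/3}"
    then have "barrier - e \<le> potential t - potential r" using near assms by auto
    then show "exp (a * (barrier - e)) \<le> exp (a * (potential t - potential r))"
      using \<open>0 < a\<close> by (simp add: mult_left_mono)
  qed (auto intro: integrable)
  also have "\<dots> \<le> integral {t..2*pi} (\<lambda>r. exp (a * (potential t - potential r)))"
    using assms pi_gt_zero by (intro integral_subset_le integrable) auto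
  finally have "\<eta> * exp (a * (barrier - e))
      \<le> integral {t..2*pi} (\<lambda>r. exp (a * (potential t - potential r)))"
    using \<open>0 < \<eta>\<close> by simp
  then have "\<eta> * exp (a * (barrier - e)) / integral {0..2*pi} (negexp a)
      \<le> integral {t..2*pi} (\<lambda>r. exp (a * (potential t - potential r))) / integral {0..2*pi} (negexp a)"
    using integral_negexp_pos[of a] by (intro divide_right_mono) auto
  also have "\<dots> \<le> u_unnorm \<gamma> t"
    using u_unnorm_ge_forward_integral[of t \<gamma>] assms pi_gt_zero unfolding a_def by auto
  finally show ?thesis unfolding a_def .
qed

lemma Zn_lower_bound:
  assumes "0 < d"
  obtains \<eta> where "0 < \<eta>"
    "\<And>\<gamma>. 0 < \<gamma> \<Longrightarrow>
      \<eta>^2 * exp (alpha \<gamma> * (barrier - d/2)) / integral {0..2*pi} (negexp (alpha \<gamma>)) \<le> Zn \<gamma>"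
proof -
  have "\<forall>e>0. \<exists>s>0. \<forall>x. dist x x0 < s \<longrightarrow> dist (potential x) (potential x0) < e" for x0
    using DERIV_isCont[OF potential_deriv] unfolding continuous_at_eps_delta .
  then obtain s1 s2 where "0 < s1" "0 < s2"
    and s1: "\<And>x. dist x (2*pi/3) < s1 \<Longrightarrow> dist (potential x) (potential (2*pi/3)) < d/4"
    and s2: "\<And>x. dist x (4*pi/3) < s2 \<Longrightarrow> dist (potential x) (potential (4*pi/3)) < d/4"
    using \<open>0 < d\<close> by (metis divide_pos_pos zero_less_numeral)
  define \<eta> where "\<eta> = min (pi/3) (min s1 s2 / 2)"
  have "0 < \<eta>" "\<eta> \<le> pi/3" "\<eta> < s1" "\<eta> < s2"
    using \<open>0 < s1\<close> \<open>0 < s2\<close> unfolding \<eta>_def by auto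
  have near: "barrier - d/2 \<le> potential t - potential r"
    if "\<bar>t - 2*pi/3\<bar> \<le> \<eta>" "\<bar>r - 4*pi/3\<bar> \<le> \<eta>" for t r
    using s1[of t] s2[of r] that \<open>\<eta> < s1\<close> \<open>\<eta> < s2\<close>
    unfolding barrier_def dist_real_def by linarith
  show ?thesis
  proof (rule that[OF \<open>0 < \<eta>\<close>])
    fix \<gamma> :: real assume "0 < \<gamma>"
    define L where "L = \<eta> * exp (alpha \<gamma> * (barrier - d/2)) / integral {0..2*pi} (negexp (alpha \<gamma>))"
    have sub: "{2*pi/3-\<eta>..2*pi/3} \<subseteq> {0..2*pi}" using \<open>\<eta> \<le> pi/3\<close> pi_gt_zero by auto
    have "integral {2*pi/3-\<eta>..2*pi/3} (\<lambda>_. L) \<le> integral {2*pi/3-\<eta>..2*pi/3} (u_unnorm \<gamma>)"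
      using u_unnorm_ge_near_max[OF \<open>0 < \<gamma>\<close> \<open>0 < \<eta>\<close> \<open>\<eta> \<le> pi/3\<close> near] unfolding L_def
      by (intro integral_le integrable_continuous_interval
          continuous_on_subset[OF continuous_on_u_unnorm sub]) auto
    also have "\<dots> \<le> Zn \<gamma>"
      unfolding Zn_def using sub u_unnorm_nonneg
      by (intro integral_subset_le integrable_continuous_interval
          continuous_on_subset[OF continuous_on_u_unnorm]) auto
    finally show "\<eta>^2 * exp (alpha \<gamma> * (barrier - d/2)) / integral {0..2*pi} (negexp (alpha \<gamma>)) \<le> Zn \<gamma>"
      using \<open>0 < \<eta>\<close> unfolding L_def by (simp add: power2_eq_square)
  qed
qed

lemma u_star_exp_bound_away_from_max:
  assumes "0 < c"
  obtains d \<eta> where "0 < d" "0 < \<eta>"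
    "\<And>\<gamma> t. 0 < \<gamma> \<Longrightarrow> 0 \<le> t \<Longrightarrow> t \<le> 2*pi \<Longrightarrow> c < \<bar>t - 2*pi/3\<bar> \<Longrightarrow>
      u_star \<gamma> t \<le> 2*pi * exp (- (d/\<gamma>)) / \<eta>^2"
proof -
  obtain d where "0 < d" "d \<le> barrier" and gap:
    "\<And>x. 0 \<le> x \<Longrightarrow> x \<le> 4*pi/3 \<Longrightarrow> c < \<bar>x - 2*pi/3\<bar> \<Longrightarrow> potential x \<le> potential (2*pi/3) - d"
    using potential_gap_away_from_max[OF \<open>0 < c\<close>] by blast
  obtain \<eta> where "0 < \<eta>" and Zn:
    "\<And>\<gamma>. 0 < \<gamma> \<Longrightarrow> \<eta>^2 * exp (alpha \<gamma> * (barrier - d/2)) / integral {0..2*pi} (negexp (alpha \<gamma>)) \<le> Zn \<gamma>"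
    using Zn_lower_bound[OF \<open>0 < d\<close>] by blast
  show ?thesis
  proof (rule that[OF \<open>0 < d\<close> \<open>0 < \<eta>\<close>])
    fix \<gamma> t :: real
    assume t: "0 < \<gamma>" "0 \<le> t" "t \<le> 2*pi" "c < \<bar>t - 2*pi/3\<bar>"
    define I where "I = integral {0..2*pi} (negexp (alpha \<gamma>))"
    have "0 < I" unfolding I_def by (rule integral_negexp_pos)
    have "u_star \<gamma> t \<le> (2*pi * exp (alpha \<gamma> * (barrier - d)) / I)
        / (\<eta>^2 * exp (alpha \<gamma> * (barrier - d/2)) / I)"
      unfolding u_star_def I_def
      using u_unnorm_le_away_from_max[OF \<open>0 < \<gamma>\<close> gap \<open>d \<le> barrier\<close>] Zn[OF \<open>0 < \<gamma>\<close>] t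
        \<open>0 < I\<close>[unfolded I_def] \<open>0 < \<eta>\<close>
      by (intro frac_le) auto
    also have "exp (alpha \<gamma> * (barrier - d)) = exp (- (d/\<gamma>)) * exp (alpha \<gamma> * (barrier - d/2))"
      unfolding alpha_def using \<open>0 < \<gamma>\<close> by (simp add: field_simps flip: exp_add)
    also have "2*pi * (exp (- (d/\<gamma>)) * exp (alpha \<gamma> * (barrier - d/2))) / I
        / (\<eta>^2 * exp (alpha \<gamma> * (barrier - d/2)) / I) = 2*pi * exp (- (d/\<gamma>)) / \<eta>^2"
      using \<open>0 < I\<close> \<open>0 < \<eta>\<close> by (simp add: field_simps)
    finally show "u_star \<gamma> t \<le> 2*pi * exp (- (d/\<gamma>)) / \<eta>^2" .
  qed
qed

lemma integral_le_of_subset_Icc: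
  fixes f :: "real \<Rightarrow> real"
  assumes "S \<subseteq> {a..b}" "a \<le> b" "0 \<le> M" "\<And>x. x \<in> S \<Longrightarrow> f x \<le> M"
  shows "integral S f \<le> (b - a) * M"
proof -
  define g where "g x = (if x \<in> S then f x else 0)" for x
  have "integral S f = integral {a..b} g"
    unfolding g_def integral_restrict_Int using assms(1) by (simp add: Int_absorb2)
  also have "\<dots> \<le> (b - a) * M"
  proof (cases "g integrable_on {a..b}")
    case True
    then have "integral {a..b} g \<le> integral {a..b} (\<lambda>_. M)"
      using assms(3,4) by (intro integral_le) (auto simp: g_def)
    then show ?thesis using \<open>a \<le> b\<close> by simp
  next
    case False
    then show ?thesis using assms(2,3) by (simp add: not_integrable_integral)
  qed
  finally show ?thesis .
qed

lemma circ_dist_le_abs: "circ_dist x y \<le> \<bar>x - y\<bar>"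
proof -
  have "circ_dist x y \<le> \<bar>x - y - 2 * pi * of_int (0::int)\<bar>"
    unfolding circ_dist_def by (rule cINF_lower) (auto intro: bdd_belowI[of _ 0])
  then show ?thesis by simp
qed

theorem lemma4p5:
  fixes c \<epsilon> :: real
  assumes "c > 0" and "\<epsilon> > 0"
  shows "\<exists>\<gamma>0>0. \<forall>\<gamma>. 0 < \<gamma> \<and> \<gamma> < \<gamma>0 \<longrightarrow>
           integral {\<theta> \<in> {0..2*pi}. circ_dist \<theta> (2*pi/3) > c} (u_star \<gamma>) < \<epsilon>"
proof -
  obtain d \<eta> where "0 < d" "0 < \<eta>" and bound:
    "\<And>\<gamma> t. 0 < \<gamma> \<Longrightarrow> 0 \<le> t \<Longrightarrow> t \<le> 2*pi \<Longrightarrow> c < \<bar>t - 2*pi/3\<bar> \<Longrightarrow>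
      u_star \<gamma> t \<le> 2*pi * exp (- (d/\<gamma>)) / \<eta>^2"
    using u_star_exp_bound_away_from_max[OF \<open>c > 0\<close>] by blast
  define \<gamma>0 where "\<gamma>0 = d * \<epsilon> * \<eta>^2 / (4*pi^2)"
  have "0 < \<gamma>0" unfolding \<gamma>0_def using \<open>0 < d\<close> \<open>0 < \<eta>\<close> \<open>\<epsilon> > 0\<close> by simp
  have "integral {\<theta> \<in> {0..2*pi}. circ_dist \<theta> (2*pi/3) > c} (u_star \<gamma>) < \<epsilon>"
    if "0 < \<gamma>" "\<gamma> < \<gamma>0" for \<gamma>
  proof -
    have "integral {\<theta> \<in> {0..2*pi}. circ_dist \<theta> (2*pi/3) > c} (u_star \<gamma>)
        \<le> (2*pi - 0) * (2*pi * exp (- (d/\<gamma>)) / \<eta>^2)"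
      using bound[OF \<open>0 < \<gamma>\<close>] circ_dist_le_abs[of _ "2*pi/3"]
      by (intro integral_le_of_subset_Icc) (auto intro: less_le_trans)
    also have "exp (- (d/\<gamma>)) < \<gamma>/d"
      using exp_gt_self[of "d/\<gamma>"] \<open>0 < d\<close> \<open>0 < \<gamma>\<close> by (simp add: exp_minus field_simps)
    also have "\<gamma>/d < \<gamma>0/d" using that \<open>0 < d\<close> by (simp add: divide_strict_right_mono)
    finally show ?thesis
      unfolding \<gamma>0_def using \<open>0 < d\<close> \<open>0 < \<eta>\<close> by (simp add: field_simps power2_eq_square)
  qed
  then show ?thesis using \<open>0 < \<gamma>0\<close> by blast
qed

end
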